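(* Consider an instance of the unique games problem: a graph $G=(V,E)$ with $|V|=n$ vertices, positive edge weights $w_{ij}>0$ for $(i,j)\in E$, a number of labels $k\ge 2$, and for each edge $(i,j)\in E$ a permutation $\sigma_{ij}$ of $\{1,\dots,k\}$. A labeling assigns to each vertex $i\in V$ a label $r_i\in\{1,\dots,k\}$; an edge $(i,j)$ is matched if $r_j=\sigma_{ij}(r_i)$, and the value of the labeling is the sum of $w_{ij}$ over matched edges. Let $z^*$ be the maximum value over all labelings. Let (P1) be the problem $$\text{maximize } E[z]=\frac14\sum_{(i,j)\in E}\sum_{r=1}^k w_{ij}\big(1+y_{ir}+y_{j\sigma_{ij}(r)}+y_{ir}y_{j\sigma_{ij}(r)}\big)$$ subject to $\sum_{r=1}^k y_{ir}=2-k$ for all $i\in V$, and $-1\le y_{ir}\le 1$ for all $r=1,\dots,k$, $i\in V$. Then (P1) is a continuous extension of the unique games problem: its objective is defined for all feasible $y$, and for every labeling $(r_i)_{i\in V}$ the point with $y_{ir_i}=1$ and $y_{ir}=-1$ for $r\ne r_i$ is feasible with objective value equal to the value of the labeling. Moreover, (1) an optimal solution of (P1) is attained with $y_{ir}\in\{-1,1\}$ for all $i,r$, and (2) the optimal value of (P1) equals $z^*$.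
   Context: The variables $y_{ir}$ correspond to probabilities $p_{ir}=\frac12(1+y_{ir})$ with which a randomized algorithm independently assigns label $r$ to vertex $i$; $E[z]$ is the expected total weight of matched edges under this randomized assignment. *)

theory Defs
  imports Complex_Main "HOL-Combinatorics.Permutations"
begin

text \<open>Edges are given as a set E of ordered pairs (i,j) (each edge listed once),
  sigma i j is the permutation attached to edge (i,j), w (i,j) its weight.\<close>

definition is_labeling :: "'a set \<Rightarrow> nat \<Rightarrow> ('a \<Rightarrow> nat) \<Rightarrow> bool" where
  "is_labeling V k r \<longleftrightarrow> (\<forall>i\<in>V. r i \<in> {1..k})"

definition labeling_value ::
  "('a \<times> 'a) set \<Rightarrow> ('a \<times> 'a \<Rightarrow> real) \<Rightarrow> ('a \<Rightarrow> 'a \<Rightarrow> nat \<Rightarrow> nat) \<Rightarrow> ('a \<Rightarrow> nat) \<Rightarrow> real" where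
  "labeling_value E w \<sigma> r = (\<Sum>(i,j)\<in>E. if r j = \<sigma> i j (r i) then w (i,j) else 0)"

definition ug_opt ::
  "'a set \<Rightarrow> ('a \<times> 'a) set \<Rightarrow> ('a \<times> 'a \<Rightarrow> real) \<Rightarrow> nat \<Rightarrow> ('a \<Rightarrow> 'a \<Rightarrow> nat \<Rightarrow> nat) \<Rightarrow> real" where
  "ug_opt V E w k \<sigma> = Max {labeling_value E w \<sigma> r | r. is_labeling V k r}"

definition P1_objective ::
  "('a \<times> 'a) set \<Rightarrow> ('a \<times> 'a \<Rightarrow> real) \<Rightarrow> nat \<Rightarrow> ('a \<Rightarrow> 'a \<Rightarrow> nat \<Rightarrow> nat) \<Rightarrow> ('a \<Rightarrow> nat \<Rightarrow> real) \<Rightarrow> real" where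
  "P1_objective E w k \<sigma> y = (1/4) * (\<Sum>(i,j)\<in>E. \<Sum>r=1..k.
      w (i,j) * (1 + y i r + y j (\<sigma> i j r) + y i r * y j (\<sigma> i j r)))"

definition P1_feasible :: "'a set \<Rightarrow> nat \<Rightarrow> ('a \<Rightarrow> nat \<Rightarrow> real) \<Rightarrow> bool" where
  "P1_feasible V k y \<longleftrightarrow>
     (\<forall>i\<in>V. (\<Sum>r=1..k. y i r) = 2 - real k) \<and>
     (\<forall>i\<in>V. \<forall>r\<in>{1..k}. -1 \<le> y i r \<and> y i r \<le> 1)"

definition labeling_point :: "('a \<Rightarrow> nat) \<Rightarrow> 'a \<Rightarrow> nat \<Rightarrow> real" where
  "labeling_point r = (\<lambda>i s. if s = r i then 1 else -1)"

end

theory Submission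
  imports Defs
begin

text \<open>Since there are no self-loops, the objective is affine in each row \<open>y\<^sub>v\<close>. Writing
  \<open>p\<^sub>v\<^sub>s = (1 + y\<^sub>v\<^sub>s)/2\<close>, the feasibility constraints say exactly that \<open>p\<^sub>v\<close> is a probability
  distribution on the labels, and the objective at \<open>y\<close> is the \<open>p\<^sub>v\<close>-average of the objectives at
  the points obtained by fixing the label of \<open>v\<close>. Some label therefore does at least as well,
  and rounding the vertices one at a time ends at a labeling point that is no worse than \<open>y\<close>.
  Hence the optimum of (P1) is attained at the labeling point of an optimal labeling.\<close>

definition label_row :: "nat \<Rightarrow> nat \<Rightarrow> real" where
  "label_row s = (\<lambda>t. if t = s then 1 else -1)"

lemma labeling_point_eq_label_row: "labeling_point r i = label_row (r i)"
  by (simp add: labeling_point_def label_row_def)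

lemma one_plus_label_row: "1 + label_row s t = (if t = s then 2 else 0)"
  by (simp add: label_row_def)

lemma sum_label_row:
  assumes "s \<in> {1..k}"
  shows "(\<Sum>t=1..k. label_row s t) = 2 - real k"
proof -
  have "(\<Sum>t=1..k. label_row s t) = (\<Sum>t=1..k. (if t = s then 2 else 0) - (1::real))"
    by (intro sum.cong) (auto simp: label_row_def)
  also have "\<dots> = 2 - real k"
    using assms by (simp add: sum_subtractf)
  finally show ?thesis .
qed

lemma P1_feasible_update_label_row:
  assumes "P1_feasible V k y" "s \<in> {1..k}"
  shows "P1_feasible V k (y(v := label_row s))"
  using assms sum_label_row[OF assms(2)] unfolding P1_feasible_def by (auto simp: label_row_def)

lemma P1_feasible_labeling_point:
  assumes "is_labeling V k r"
  shows "P1_feasible V k (labeling_point r)"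
  using assms sum_label_row unfolding P1_feasible_def is_labeling_def labeling_point_eq_label_row
  by (auto simp: label_row_def)

lemma P1_objective_factored:
  "P1_objective E w k \<sigma> y =
     (1/4) * (\<Sum>(i,j)\<in>E. w (i,j) * (\<Sum>t=1..k. (1 + y i t) * (1 + y j (\<sigma> i j t))))"
  unfolding P1_objective_def by (auto intro!: sum.cong simp: sum_distrib_left algebra_simps)

lemma P1_objective_cong:
  assumes "E \<subseteq> V \<times> V" "\<forall>i\<in>V. y i = y' i"
  shows "P1_objective E w k \<sigma> y = P1_objective E w k \<sigma> y'"
  unfolding P1_objective_def using assms by (intro arg_cong[where f = "\<lambda>x. 1/4 * x"] sum.cong) auto

lemma P1_objective_labeling_point:
  assumes "E \<subseteq> V \<times> V" "is_labeling V k r"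
  shows "P1_objective E w k \<sigma> (labeling_point r) = labeling_value E w \<sigma> r"
proof -
  have edge: "w (i,j) * (\<Sum>t=1..k. (1 + labeling_point r i t) * (1 + labeling_point r j (\<sigma> i j t)))
      = 4 * (if r j = \<sigma> i j (r i) then w (i,j) else 0)" if "(i,j) \<in> E" for i j
  proof -
    have "r i \<in> {1..k}"
      using that assms unfolding is_labeling_def by auto
    then show ?thesis
      by (simp add: labeling_point_eq_label_row one_plus_label_row if_distrib[of "\<lambda>x. x * _"]
          sum.delta cong: if_cong)
  qed
  have "P1_objective E w k \<sigma> (labeling_point r)
      = 1/4 * (\<Sum>(i,j)\<in>E. 4 * (if r j = \<sigma> i j (r i) then w (i,j) else 0))"
    unfolding P1_objective_factored
    by (intro arg_cong[where f = "\<lambda>x. 1/4 * x"] sum.cong refl) (clarify, erule edge)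
  also have "\<dots> = labeling_value E w \<sigma> r"
    by (simp add: labeling_value_def case_prod_beta sum_distrib_left[symmetric])
  finally show ?thesis .
qed

text \<open>This is where the absence of self-loops enters: the row of \<open>v\<close> occurs in at most one
  factor of each product, so the edge term is affine in that row.\<close>

lemma edge_term_row_average:
  assumes "i \<noteq> j" "\<pi> permutes {1..k}" "(\<Sum>s=1..k. y v s) = 2 - real k"
  shows "(\<Sum>t=1..k. (1 + y i t) * (1 + y j (\<pi> t))) =
    (\<Sum>s=1..k. (1 + y v s) / 2 *
       (\<Sum>t=1..k. (1 + (y(v := label_row s)) i t) * (1 + (y(v := label_row s)) j (\<pi> t))))"
proof -
  consider "v = i" | "v = j" | "v \<noteq> i" "v \<noteq> j" by blast
  then show ?thesis
  proof cases
    case 1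
    with assms(1) show ?thesis
      by (simp add: one_plus_label_row if_distrib[of "\<lambda>x. x * _"] sum.delta cong: if_cong)
        (rule sum.cong[OF refl], simp add: algebra_simps)
  next
    case 2
    have \<pi>_in: "\<pi> t \<in> {1..k}" if "t \<in> {1..k}" for t
      using that assms(2) permutes_in_image by metis
    have "(\<Sum>s=1..k. (1 + y v s) / 2 *
        (\<Sum>t=1..k. (1 + (y(v := label_row s)) i t) * (1 + (y(v := label_row s)) j (\<pi> t))))
      = (\<Sum>s=1..k. \<Sum>t=1..k. if \<pi> t = s then (1 + y i t) * (1 + y j s) else 0)"
      using 2 assms(1) by (auto simp: one_plus_label_row sum_distrib_left intro!: sum.cong)
    also have "\<dots> = (\<Sum>t=1..k. \<Sum>s=1..k. if \<pi> t = s then (1 + y i t) * (1 + y j s) else 0)"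
      by (rule sum.swap)
    also have "\<dots> = (\<Sum>t=1..k. (1 + y i t) * (1 + y j (\<pi> t)))"
      using \<pi>_in by (simp add: sum.delta)
    finally show ?thesis
      by (rule sym)
  next
    case 3
    then have unchanged: "(y(v := label_row s)) i = y i" "(y(v := label_row s)) j = y j" for s
      by simp_all
    have "(\<Sum>s=1..k. (1 + y v s) / 2) = 1"
      using assms(3) by (simp add: sum_divide_distrib[symmetric] sum.distrib)
    then have "(\<Sum>t=1..k. (1 + y i t) * (1 + y j (\<pi> t)))
        = (\<Sum>s=1..k. (1 + y v s) / 2) * (\<Sum>t=1..k. (1 + y i t) * (1 + y j (\<pi> t)))"
      by simp
    also have "\<dots> = (\<Sum>s=1..k. (1 + y v s) / 2 * (\<Sum>t=1..k. (1 + y i t) * (1 + y j (\<pi> t))))"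
      by (rule sum_distrib_right)
    finally show ?thesis
      by (simp only: unchanged)
  qed
qed

lemma P1_objective_row_average:
  assumes "\<forall>(i,j)\<in>E. i \<noteq> j" "\<forall>(i,j)\<in>E. \<sigma> i j permutes {1..k}"
    and "(\<Sum>s=1..k. y v s) = 2 - real k"
  shows "P1_objective E w k \<sigma> y =
    (\<Sum>s=1..k. (1 + y v s) / 2 * P1_objective E w k \<sigma> (y(v := label_row s)))"
proof -
  have "P1_objective E w k \<sigma> y = (1/4) * (\<Sum>(i,j)\<in>E. w (i,j) * (\<Sum>s=1..k. (1 + y v s) / 2 *
      (\<Sum>t=1..k. (1 + (y(v := label_row s)) i t) * (1 + (y(v := label_row s)) j (\<sigma> i j t)))))"
    unfolding P1_objective_factored
  proof (intro arg_cong[where f = "\<lambda>x. 1/4 * x"] sum.cong refl, clarify)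
    fix i j
    assume "(i,j) \<in> E"
    with assms have "i \<noteq> j" "\<sigma> i j permutes {1..k}"
      by auto
    from edge_term_row_average[of i j "\<sigma> i j" k y v, OF this assms(3)]
    show "w (i,j) * (\<Sum>t=1..k. (1 + y i t) * (1 + y j (\<sigma> i j t))) =
      w (i,j) * (\<Sum>s=1..k. (1 + y v s) / 2 *
        (\<Sum>t=1..k. (1 + (y(v := label_row s)) i t) * (1 + (y(v := label_row s)) j (\<sigma> i j t))))"
      by (rule arg_cong)
  qed
  also have "\<dots> = (\<Sum>s=1..k. (1 + y v s) / 2 * P1_objective E w k \<sigma> (y(v := label_row s)))"
    unfolding P1_objective_factored
    by (simp add: sum_distrib_left sum.swap[of _ E] case_prod_beta mult_ac)
  finally show ?thesis .
qed

lemma ex_ge_weighted_average: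
  fixes p f :: "'b \<Rightarrow> real"
  assumes "finite A" "\<forall>a\<in>A. p a \<ge> 0" "(\<Sum>a\<in>A. p a) = 1"
  shows "\<exists>a\<in>A. (\<Sum>b\<in>A. p b * f b) \<le> f a"
proof -
  have "A \<noteq> {}"
    using assms(3) by auto
  then have "Max (f ` A) \<in> f ` A"
    using assms(1) by simp
  then obtain a where a: "a \<in> A" "f a = Max (f ` A)"
    by (metis imageE)
  have "(\<Sum>b\<in>A. p b * f b) \<le> (\<Sum>b\<in>A. p b * f a)"
    using assms a by (intro sum_mono mult_left_mono) auto
  also have "\<dots> = f a"
    using assms(3) by (simp add: sum_distrib_right[symmetric])
  finally show ?thesis
    using a by blast
qed

lemma P1_round_vertex:
  assumes "\<forall>(i,j)\<in>E. i \<noteq> j" "\<forall>(i,j)\<in>E. \<sigma> i j permutes {1..k}"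
    and "P1_feasible V k y" "v \<in> V"
  obtains s where "s \<in> {1..k}" "P1_feasible V k (y(v := label_row s))"
    "P1_objective E w k \<sigma> y \<le> P1_objective E w k \<sigma> (y(v := label_row s))"
proof -
  have row: "(\<Sum>s=1..k. y v s) = 2 - real k" "\<forall>s\<in>{1..k}. 0 \<le> (1 + y v s) / 2"
    using assms(3,4) unfolding P1_feasible_def by force+
  then have "(\<Sum>s=1..k. (1 + y v s) / 2) = 1"
    by (simp add: sum_divide_distrib[symmetric] sum.distrib)
  from ex_ge_weighted_average[OF _ row(2) this,
      of "\<lambda>s. P1_objective E w k \<sigma> (y(v := label_row s))"]
  obtain s where s: "s \<in> {1..k}" and best:
    "(\<Sum>s=1..k. (1 + y v s) / 2 * P1_objective E w k \<sigma> (y(v := label_row s)))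
       \<le> P1_objective E w k \<sigma> (y(v := label_row s))"
    by auto
  have "P1_objective E w k \<sigma> y =
      (\<Sum>s=1..k. (1 + y v s) / 2 * P1_objective E w k \<sigma> (y(v := label_row s)))"
    using assms(1,2) row(1) by (rule P1_objective_row_average)
  from this best have "P1_objective E w k \<sigma> y \<le> P1_objective E w k \<sigma> (y(v := label_row s))"
    by (rule ord_eq_le_trans)
  then show thesis
    by (rule that[OF s P1_feasible_update_label_row[OF assms(3) s]])
qed

lemma P1_round_vertices:
  assumes "\<forall>(i,j)\<in>E. i \<noteq> j" "\<forall>(i,j)\<in>E. \<sigma> i j permutes {1..k}"
    and "P1_feasible V k y" "finite S" "S \<subseteq> V"
  shows "\<exists>y' r. P1_feasible V k y' \<and> P1_objective E w k \<sigma> y \<le> P1_objective E w k \<sigma> y' \<and>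
           (\<forall>i\<in>S. r i \<in> {1..k} \<and> y' i = label_row (r i))"
  using assms(4,5)
proof (induction S rule: finite_induct)
  case empty
  show ?case
    using assms(3) by blast
next
  case (insert v S)
  then obtain y' r where y': "P1_feasible V k y'" "P1_objective E w k \<sigma> y \<le> P1_objective E w k \<sigma> y'"
    and r: "\<forall>i\<in>S. r i \<in> {1..k} \<and> y' i = label_row (r i)"
    by auto
  obtain s where s: "s \<in> {1..k}" and feasible: "P1_feasible V k (y'(v := label_row s))"
    and "P1_objective E w k \<sigma> y' \<le> P1_objective E w k \<sigma> (y'(v := label_row s))"
    using P1_round_vertex[OF assms(1,2) y'(1)] insert.prems by blast
  with y'(2) have "P1_objective E w k \<sigma> y \<le> P1_objective E w k \<sigma> (y'(v := label_row s))"
    by linarith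
  moreover have "\<forall>i\<in>insert v S. (r(v := s)) i \<in> {1..k} \<and>
      (y'(v := label_row s)) i = label_row ((r(v := s)) i)"
    using r s by simp
  ultimately show ?case
    using feasible by blast
qed

lemma P1_objective_le_labeling_value:
  assumes "finite V" "E \<subseteq> V \<times> V" "\<forall>(i,j)\<in>E. i \<noteq> j" "\<forall>(i,j)\<in>E. \<sigma> i j permutes {1..k}"
    and "P1_feasible V k y"
  obtains r where "is_labeling V k r" "P1_objective E w k \<sigma> y \<le> labeling_value E w \<sigma> r"
proof -
  obtain y' r where "P1_objective E w k \<sigma> y \<le> P1_objective E w k \<sigma> y'"
    and r: "\<forall>i\<in>V. r i \<in> {1..k} \<and> y' i = label_row (r i)"
    using P1_round_vertices[OF assms(3,4,5,1)] by blast
  moreover have "is_labeling V k r"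
    using r unfolding is_labeling_def by blast
  moreover have "P1_objective E w k \<sigma> y' = P1_objective E w k \<sigma> (labeling_point r)"
    using r by (intro P1_objective_cong[OF assms(2)]) (simp add: labeling_point_eq_label_row)
  ultimately show thesis
    using that P1_objective_labeling_point[OF assms(2)] by simp
qed

lemma finite_labeling_values:
  assumes "finite V" "E \<subseteq> V \<times> V"
  shows "finite {labeling_value E w \<sigma> r | r. is_labeling V k r}"
proof -
  have "{labeling_value E w \<sigma> r | r. is_labeling V k r}
      \<subseteq> labeling_value E w \<sigma> ` (V \<rightarrow>\<^sub>E {1..k})"
  proof clarify
    fix r
    assume "is_labeling V k r"
    then have "labeling_value E w \<sigma> (restrict r V) \<in> labeling_value E w \<sigma> ` (V \<rightarrow>\<^sub>E {1..k})"
      unfolding is_labeling_def by (intro imageI) auto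
    moreover have "labeling_value E w \<sigma> r = labeling_value E w \<sigma> (restrict r V)"
      unfolding labeling_value_def using assms(2) by (intro sum.cong) auto
    ultimately show "labeling_value E w \<sigma> r \<in> labeling_value E w \<sigma> ` (V \<rightarrow>\<^sub>E {1..k})"
      by simp
  qed
  then show ?thesis
    using assms(1) by (meson finite_PiE finite_atLeastAtMost finite_imageI finite_subset)
qed

lemma labeling_value_le_ug_opt:
  assumes "finite V" "E \<subseteq> V \<times> V" "is_labeling V k r"
  shows "labeling_value E w \<sigma> r \<le> ug_opt V E w k \<sigma>"
  unfolding ug_opt_def using assms(3)
  by (intro Max_ge[OF finite_labeling_values[OF assms(1,2)]]) blast

lemma ug_opt_attained:
  assumes "finite V" "E \<subseteq> V \<times> V" "k \<ge> 1"
  obtains r where "is_labeling V k r" "labeling_value E w \<sigma> r = ug_opt V E w k \<sigma>"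
proof -
  have "is_labeling V k (\<lambda>_. 1)"
    using assms(3) unfolding is_labeling_def by simp
  then have "ug_opt V E w k \<sigma> \<in> {labeling_value E w \<sigma> r | r. is_labeling V k r}"
    unfolding ug_opt_def by (intro Max_in[OF finite_labeling_values[OF assms(1,2)]]) blast
  then obtain r where "is_labeling V k r" "ug_opt V E w k \<sigma> = labeling_value E w \<sigma> r"
    by blast
  then show thesis
    using that by simp
qed

theorem theorem1:
  fixes V :: "'a set" and E :: "('a \<times> 'a) set" and w :: "'a \<times> 'a \<Rightarrow> real"
    and k :: nat and \<sigma> :: "'a \<Rightarrow> 'a \<Rightarrow> nat \<Rightarrow> nat"
  assumes "finite V"
    and "E \<subseteq> V \<times> V"
    and "\<forall>(i,j)\<in>E. i \<noteq> j"
    and "\<forall>e\<in>E. w e > 0"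
    and "k \<ge> 2"
    and "\<forall>(i,j)\<in>E. \<sigma> i j permutes {1..k}"
  shows "(\<forall>r. is_labeling V k r \<longrightarrow>
            P1_feasible V k (labeling_point r) \<and>
            P1_objective E w k \<sigma> (labeling_point r) = labeling_value E w \<sigma> r)
       \<and> (\<exists>y. P1_feasible V k y \<and> (\<forall>i\<in>V. \<forall>r\<in>{1..k}. y i r \<in> {-1, 1}) \<and>
            (\<forall>y'. P1_feasible V k y' \<longrightarrow> P1_objective E w k \<sigma> y' \<le> P1_objective E w k \<sigma> y))
       \<and> (\<forall>y. P1_feasible V k y \<longrightarrow> P1_objective E w k \<sigma> y \<le> ug_opt V E w k \<sigma>)
       \<and> (\<exists>y. P1_feasible V k y \<and> P1_objective E w k \<sigma> y = ug_opt V E w k \<sigma>)"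
proof -
  have k: "k \<ge> 1"
    using assms(5) by simp
  have extension: "P1_feasible V k (labeling_point r) \<and>
      P1_objective E w k \<sigma> (labeling_point r) = labeling_value E w \<sigma> r" if "is_labeling V k r" for r
    using P1_feasible_labeling_point[OF that] P1_objective_labeling_point[OF assms(2) that] by (rule conjI)
  have upper: "P1_objective E w k \<sigma> y \<le> ug_opt V E w k \<sigma>" if feasible_y: "P1_feasible V k y" for y
  proof -
    obtain r where "is_labeling V k r" "P1_objective E w k \<sigma> y \<le> labeling_value E w \<sigma> r"
      using P1_objective_le_labeling_value[OF assms(1,2,3,6) feasible_y] .
    then show ?thesis
      using labeling_value_le_ug_opt[OF assms(1,2)] by (blast intro: order_trans)
  qed
  obtain r where r: "is_labeling V k r" "labeling_value E w \<sigma> r = ug_opt V E w k \<sigma>"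
    using ug_opt_attained[OF assms(1,2) k] .
  have feasible: "P1_feasible V k (labeling_point r)"
    and attains: "P1_objective E w k \<sigma> (labeling_point r) = ug_opt V E w k \<sigma>"
    using extension[OF r(1)] r(2) by simp_all
  have optimal: "\<forall>y. P1_feasible V k y \<longrightarrow>
      P1_objective E w k \<sigma> y \<le> P1_objective E w k \<sigma> (labeling_point r)"
    using upper attains by simp
  have "\<forall>i\<in>V. \<forall>s\<in>{1..k}. labeling_point r i s \<in> {-1, 1}"
    by (simp add: labeling_point_def)
  then show ?thesis
    using extension upper feasible attains optimal by blast
qed

end
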